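(* Let $L$ be a 3-dimensional real connected Lie group with the left-invariant almost paracontact metric structure $(\varphi,\xi,\eta,g)$ described in the context, and write $[E_i,E_j]=\sum_k C_{ij}^kE_k$. Then: (1) $L\in\mathbb G_5$ if and only if $[E_1,E_2]=C_{12}^1E_1+C_{12}^2E_2+C_{12}^3E_3$, $[E_1,E_3]=C_{13}^2E_2$, $[E_2,E_3]=C_{13}^2E_1$, with $C_{12}^3\neq0$ (then $\theta_F(\xi)=C_{12}^3$), $C_{12}^1C_{13}^2=0$, $C_{12}^2C_{13}^2=0$; (2) $L\in\mathbb G_6$ if and only if $[E_1,E_2]=C_{12}^1E_1+C_{12}^2E_2$, $[E_1,E_3]=C_{13}^1E_1+C_{13}^2E_2$, $[E_2,E_3]=C_{13}^2E_1+C_{13}^1E_2$, with $C_{13}^1\neq0$ (then $\theta^*_F(\xi)=-2C_{13}^1$), $C_{12}^2C_{13}^2-C_{13}^1C_{12}^1=0$, $C_{12}^1C_{13}^2-C_{13}^1C_{12}^2=0$; (3) $L\in\mathbb G_{10}$ if and only if $[E_1,E_2]=C_{12}^1E_1+C_{12}^2E_2$, $[E_1,E_3]=C_{13}^1E_1+C_{13}^2E_2$, $[E_2,E_3]=C_{23}^1E_1-C_{13}^1E_2$, with ($C_{13}^2\neq C_{23}^1$ or $C_{13}^1\neq0$), $C_{12}^1C_{13}^1+C_{12}^2C_{23}^1=0$, $C_{12}^1C_{13}^2-C_{12}^2C_{13}^1=0$; (4) $L\in\mathbb G_{12}$ if and only if $[E_1,E_2]=C_{12}^1E_1+C_{12}^2E_2$,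 $[E_1,E_3]=C_{13}^2E_2+C_{13}^3E_3$, $[E_2,E_3]=C_{13}^2E_1+C_{23}^3E_3$, with ($C_{13}^3\neq0$ or $C_{23}^3\neq0$), $(C_{12}^1-C_{23}^3)C_{13}^2=0$, $(C_{12}^2+C_{13}^3)C_{13}^2=0$, $(C_{12}^1-C_{23}^3)C_{13}^3+(C_{12}^2+C_{13}^3)C_{23}^3=0$.
   Context: $L$ is a 3-dimensional real connected Lie group with a basis $E_1,E_2,E_3$ of left-invariant vector fields; the structure constants $C_{ij}^k=-C_{ji}^k$ are real. The left-invariant structure is $\varphi E_1=E_2$, $\varphi E_2=E_1$, $\varphi E_3=0$, $\xi=E_3$, $\eta(E_3)=1$, $\eta(E_1)=\eta(E_2)=0$, $g(E_1,E_1)=g(E_3,E_3)=1$, $g(E_2,E_2)=-1$, $g(E_i,E_j)=0$ for $i\neq j$; this is an almost paracontact metric structure ($\varphi^2=\mathrm{id}-\eta\otimes\xi$, $\eta(\xi)=1$, $\varphi\xi=0$, $g(\varphi x,\varphi y)=-g(x,y)+\eta(x)\eta(y)$). The structure tensor is $F(x,y,z)=g((\nabla_x\varphi)y,z)$ with $\nabla$ the Levi-Civita connection of $g$; $\theta_F(x)=\sum_{i,j=1}^{2}g^{ij}F(E_i,E_j,x)$, $\theta^*_F(x)=\sum_{i,j=1}^{2}g^{ij}F(E_i,\varphi E_j,x)$ with $(g^{ij})=\mathrm{diag}(1,-1)$. Classes (conditions for all $x,y,z$, with $n=1$): $\mathbb G_5$: $F(x,y,z)=\frac{\theta_F(\xi)}{2}\{\eta(y)g(\varphi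 x,\varphi z)-\eta(z)g(\varphi x,\varphi y)\}$; $\mathbb G_6$: $F(x,y,z)=-\frac{\theta^*_F(\xi)}{2}\{\eta(y)g(x,\varphi z)-\eta(z)g(x,\varphi y)\}$; $\mathbb G_{10}$: $F(x,y,z)=-\eta(y)F(x,z,\xi)+\eta(z)F(x,y,\xi)$ and $F(x,y,\xi)=F(y,x,\xi)=F(\varphi x,\varphi y,\xi)$; $\mathbb G_{12}$: $F(x,y,z)=\eta(x)\{\eta(y)F(\xi,\xi,z)-\eta(z)F(\xi,\xi,y)\}$. "$L\in\mathbb G_i$" means that the structure tensor lies in $\mathbb G_i$ at every point and is not identically zero. *)

theory Defs
  imports Complex_Main
begin

text \<open>Index set of the basis E1, E2, E3 of left-invariant vector fields
 (the Lie algebra of L).  A left-invariant vector field (equivalently a tangent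
 vector at any point, by left translation) is a coefficient function idx => real.\<close>

datatype idx = I1 | I2 | I3

lemma UNIV_idx: "(UNIV :: idx set) = {I1, I2, I3}"
  using idx.exhaust by auto

instance idx :: finite
  by standard (simp add: UNIV_idx)

type_synonym vec = "idx \<Rightarrow> real"

definition E :: "idx \<Rightarrow> vec" where
  "E i = (\<lambda>k. if k = i then 1 else 0)"

definition vec3 :: "real \<Rightarrow> real \<Rightarrow> real \<Rightarrow> vec" where
  "vec3 a b c = (\<lambda>k. case k of I1 \<Rightarrow> a | I2 \<Rightarrow> b | I3 \<Rightarrow> c)"

text \<open>Structure constants: C i j k = C_{ij}^k, so [E_i,E_j] = sum_k C_{ij}^k E_k.\<close>

type_synonym sconst = "idx \<Rightarrow> idx \<Rightarrow> idx \<Rightarrow> real"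

definition bracket :: "sconst \<Rightarrow> vec \<Rightarrow> vec \<Rightarrow> vec" where
  "bracket C x y = (\<lambda>k. \<Sum>i\<in>UNIV. \<Sum>j\<in>UNIV. x i * y j * C i j k)"

definition lie_structure_constants :: "sconst \<Rightarrow> bool" where
  "lie_structure_constants C \<longleftrightarrow>
     (\<forall>i j k. C i j k = - C j i k) \<and>
     (\<forall>i j l m. (\<Sum>k\<in>UNIV. C i j k * C k l m + C j l k * C k i m + C l i k * C k j m) = 0)"

definition gdiag :: "idx \<Rightarrow> real" where
  "gdiag i = (if i = I2 then -1 else 1)"

definition gm :: "vec \<Rightarrow> vec \<Rightarrow> real" where
  "gm x y = (\<Sum>i\<in>UNIV. gdiag i * x i * y i)"

definition phi :: "vec \<Rightarrow> vec" where
  "phi x = vec3 (x I2) (x I1) 0"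

definition xi :: vec where
  "xi = E I3"

definition eta :: "vec \<Rightarrow> real" where
  "eta x = x I3"

text \<open>Levi-Civita connection on left-invariant fields, given by the Koszul formula
  2 g(nabla_X Y, Z) = g([X,Y],Z) - g([Y,Z],X) + g([Z,X],Y);
 the component along E_k is g(nabla_X Y, E_k) / g(E_k,E_k).\<close>

definition nabla :: "sconst \<Rightarrow> vec \<Rightarrow> vec \<Rightarrow> vec" where
  "nabla C x y = (\<lambda>k. gdiag k * ((gm (bracket C x y) (E k) - gm (bracket C y (E k)) x
                                    + gm (bracket C (E k) x) y) / 2))"

definition FF :: "sconst \<Rightarrow> vec \<Rightarrow> vec \<Rightarrow> vec \<Rightarrow> real" where
  "FF C x y z = gm (\<lambda>k. nabla C x (phi y) k - phi (nabla C x y) k) z"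

definition gInv12 :: "idx \<Rightarrow> idx \<Rightarrow> real" where
  "gInv12 i j = (if i = j then gdiag i else 0)"

definition theta :: "sconst \<Rightarrow> vec \<Rightarrow> real" where
  "theta C x = (\<Sum>i\<in>{I1, I2}. \<Sum>j\<in>{I1, I2}. gInv12 i j * FF C (E i) (E j) x)"

definition theta_star :: "sconst \<Rightarrow> vec \<Rightarrow> real" where
  "theta_star C x = (\<Sum>i\<in>{I1, I2}. \<Sum>j\<in>{I1, I2}. gInv12 i j * FF C (E i) (phi (E j)) x)"

definition F_nonzero :: "sconst \<Rightarrow> bool" where
  "F_nonzero C \<longleftrightarrow> (\<exists>x y z. FF C x y z \<noteq> 0)"

definition inG5 :: "sconst \<Rightarrow> bool" where
  "inG5 C \<longleftrightarrow> F_nonzero C \<and>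
     (\<forall>x y z. FF C x y z = theta C xi / 2 *
        (eta y * gm (phi x) (phi z) - eta z * gm (phi x) (phi y)))"

definition inG6 :: "sconst \<Rightarrow> bool" where
  "inG6 C \<longleftrightarrow> F_nonzero C \<and>
     (\<forall>x y z. FF C x y z = - (theta_star C xi / 2) *
        (eta y * gm x (phi z) - eta z * gm x (phi y)))"

definition inG10 :: "sconst \<Rightarrow> bool" where
  "inG10 C \<longleftrightarrow> F_nonzero C \<and>
     (\<forall>x y z. FF C x y z = - eta y * FF C x z xi + eta z * FF C x y xi) \<and>
     (\<forall>x y. FF C x y xi = FF C y x xi \<and> FF C y x xi = FF C (phi x) (phi y) xi)"

definition inG12 :: "sconst \<Rightarrow> bool" where
  "inG12 C \<longleftrightarrow> F_nonzero C \<and>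
     (\<forall>x y z. FF C x y z = eta x * (eta y * FF C xi xi z - eta z * FF C xi xi y))"

end

theory Submission
  imports Defs
begin

text \<open>By the Koszul formula the structure tensor is a trilinear form whose only coefficients are
  six linear combinations of the structure constants (the values \<open>F(E\<^sub>i, E\<^sub>j, \<xi>)\<close>).
  Each of the classes G5, G6, G10, G12 is therefore cut out by linear equations in the constants,
  which fix the shape of the brackets; the remaining quadratic conditions of the theorem are the
  Jacobi identity for \<open>E\<^sub>1, E\<^sub>2, E\<^sub>3\<close> under these linear constraints.\<close>

lemma sum_UNIV_idx: "(\<Sum>i\<in>UNIV. f i) = f I1 + f I2 + (f I3 :: 'a::comm_monoid_add)"
  by (simp add: UNIV_idx add.assoc)

lemma bracket_E_E: "bracket C (E i) (E j) = C i j"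
  by (cases i; cases j) (auto simp: bracket_def E_def sum_UNIV_idx)

lemma vec3_eq_iff: "f = vec3 a b c \<longleftrightarrow> f I1 = a \<and> f I2 = b \<and> f I3 = c"
  by (auto simp: vec3_def fun_eq_iff split: idx.split)

context
  fixes C :: sconst
  assumes lie: "lie_structure_constants C"
begin

lemma structure_constants_antisym:
  "C i i k = 0" "C I2 I1 k = - C I1 I2 k" "C I3 I1 k = - C I1 I3 k" "C I3 I2 k = - C I2 I3 k"
  using lie unfolding lie_structure_constants_def by (metis neg_equal_zero)+

lemma jacobi_E1_E2_E3:
  "(C I1 I2 I1 - C I2 I3 I3) * C I1 I3 m + (C I1 I2 I2 + C I1 I3 I3) * C I2 I3 m
     - (C I1 I3 I1 + C I2 I3 I2) * C I1 I2 m = 0"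
proof -
  have "(\<Sum>k\<in>UNIV. C I1 I2 k * C k I3 m + C I2 I3 k * C k I1 m + C I3 I1 k * C k I2 m) = 0"
    using lie unfolding lie_structure_constants_def by blast
  then show ?thesis
    using structure_constants_antisym by (simp add: sum_UNIV_idx algebra_simps)
qed

lemma FF_expand:
  "FF C x y z =
      x I1 * (y I1 * z I3 - y I3 * z I1) * ((C I1 I2 I3 + C I1 I3 I2 - C I2 I3 I1) / 2)
    + x I1 * (y I3 * z I2 - y I2 * z I3) * C I1 I3 I1
    + x I2 * (y I1 * z I3 - y I3 * z I1) * C I2 I3 I2
    + x I2 * (y I2 * z I3 - y I3 * z I2) * ((C I1 I3 I2 - C I2 I3 I1 - C I1 I2 I3) / 2)
    + x I3 * (y I3 * z I1 - y I1 * z I3) * C I2 I3 I3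
    + x I3 * (y I3 * z I2 - y I2 * z I3) * C I1 I3 I3"
  unfolding FF_def gm_def nabla_def bracket_def phi_def vec3_def E_def sum_UNIV_idx gdiag_def
  using structure_constants_antisym by (simp add: algebra_simps divide_simps)

lemma theta_xi: "theta C xi = C I1 I2 I3"
  unfolding theta_def FF_expand
  by (simp add: E_def xi_def gInv12_def gdiag_def field_simps)

lemma theta_star_xi: "theta_star C xi = - C I1 I3 I1 - C I2 I3 I2"
  unfolding theta_star_def FF_expand
  by (simp add: E_def xi_def gInv12_def gdiag_def phi_def vec3_def)

lemma F_nonzero_iff:
  "F_nonzero C \<longleftrightarrow>
     C I1 I2 I3 + C I1 I3 I2 - C I2 I3 I1 \<noteq> 0 \<or> C I1 I3 I2 - C I2 I3 I1 - C I1 I2 I3 \<noteq> 0 \<or>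
     C I1 I3 I1 \<noteq> 0 \<or> C I2 I3 I2 \<noteq> 0 \<or> C I2 I3 I3 \<noteq> 0 \<or> C I1 I3 I3 \<noteq> 0"
  (is "_ \<longleftrightarrow> ?some_coefficient_nonzero")
proof
  assume "F_nonzero C"
  then obtain x y z where "FF C x y z \<noteq> 0"
    unfolding F_nonzero_def by blast
  then show ?some_coefficient_nonzero
    unfolding FF_expand by auto
next
  have basis: "FF C (E i) (E j) (E k) \<noteq> 0 \<Longrightarrow> F_nonzero C" for i j k
    unfolding F_nonzero_def by blast
  assume ?some_coefficient_nonzero
  then show "F_nonzero C"
    using basis[of I1 I1 I3] basis[of I2 I2 I3] basis[of I1 I2 I3] basis[of I2 I1 I3]
      basis[of I3 I1 I3] basis[of I3 I2 I3]
    unfolding FF_expand by (auto simp: E_def)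
qed

lemma inG5_iff_constants:
  "inG5 C \<longleftrightarrow> F_nonzero C \<and>
     C I1 I3 I1 = 0 \<and> C I2 I3 I2 = 0 \<and> C I2 I3 I3 = 0 \<and> C I1 I3 I3 = 0 \<and> C I1 I3 I2 = C I2 I3 I1"
  (is "_ \<longleftrightarrow> _ \<and> ?lin")
proof -
  have "(\<forall>x y z. FF C x y z = theta C xi / 2 *
          (eta y * gm (phi x) (phi z) - eta z * gm (phi x) (phi y))) \<longleftrightarrow> ?lin"
  proof
    assume "\<forall>x y z. FF C x y z = theta C xi / 2 *
          (eta y * gm (phi x) (phi z) - eta z * gm (phi x) (phi y))"
    then have basis: "FF C (E i) (E j) (E k) = theta C xi / 2 *
          (eta (E j) * gm (phi (E i)) (phi (E k)) - eta (E k) * gm (phi (E i)) (phi (E j)))"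
      for i j k by blast
    show ?lin
      using basis[of I1 I1 I3] basis[of I1 I2 I3] basis[of I2 I1 I3] basis[of I3 I1 I3]
        basis[of I3 I2 I3]
      unfolding FF_expand theta_xi
      by (simp add: E_def eta_def gm_def phi_def vec3_def sum_UNIV_idx gdiag_def field_simps)
  qed (simp add: FF_expand theta_xi eta_def gm_def phi_def vec3_def sum_UNIV_idx gdiag_def
        field_simps)
  then show ?thesis
    unfolding inG5_def by blast
qed

lemma inG6_iff_constants:
  "inG6 C \<longleftrightarrow> F_nonzero C \<and>
     C I1 I2 I3 = 0 \<and> C I1 I3 I2 = C I2 I3 I1 \<and> C I2 I3 I2 = C I1 I3 I1 \<and>
     C I2 I3 I3 = 0 \<and> C I1 I3 I3 = 0"
  (is "_ \<longleftrightarrow> _ \<and> ?lin")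
proof -
  have "(\<forall>x y z. FF C x y z = - (theta_star C xi / 2) *
          (eta y * gm x (phi z) - eta z * gm x (phi y))) \<longleftrightarrow> ?lin"
  proof
    assume "\<forall>x y z. FF C x y z = - (theta_star C xi / 2) *
          (eta y * gm x (phi z) - eta z * gm x (phi y))"
    then have basis: "FF C (E i) (E j) (E k) = - (theta_star C xi / 2) *
          (eta (E j) * gm (E i) (phi (E k)) - eta (E k) * gm (E i) (phi (E j)))"
      for i j k by blast
    show ?lin
      using basis[of I1 I1 I3] basis[of I1 I2 I3] basis[of I2 I2 I3] basis[of I3 I1 I3]
        basis[of I3 I2 I3]
      unfolding FF_expand theta_star_xi
      by (simp add: E_def eta_def gm_def phi_def vec3_def sum_UNIV_idx gdiag_def field_simps)
  qed (simp add: FF_expand theta_star_xi eta_def gm_def phi_def vec3_def sum_UNIV_idx gdiag_def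
        field_simps)
  then show ?thesis
    unfolding inG6_def by blast
qed

lemma inG10_iff_constants:
  "inG10 C \<longleftrightarrow> F_nonzero C \<and>
     C I1 I2 I3 = 0 \<and> C I2 I3 I2 = - C I1 I3 I1 \<and> C I2 I3 I3 = 0 \<and> C I1 I3 I3 = 0"
  (is "_ \<longleftrightarrow> _ \<and> ?lin")
proof -
  have "((\<forall>x y z. FF C x y z = - eta y * FF C x z xi + eta z * FF C x y xi) \<and>
         (\<forall>x y. FF C x y xi = FF C y x xi \<and> FF C y x xi = FF C (phi x) (phi y) xi)) \<longleftrightarrow> ?lin"
  proof
    assume "(\<forall>x y z. FF C x y z = - eta y * FF C x z xi + eta z * FF C x y xi) \<and>
         (\<forall>x y. FF C x y xi = FF C y x xi \<and> FF C y x xi = FF C (phi x) (phi y) xi)"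
    then have basis: "FF C (E i) (E j) xi = FF C (E j) (E i) xi \<and>
        FF C (E j) (E i) xi = FF C (phi (E i)) (phi (E j)) xi" for i j
      by blast
    show ?lin
      using basis[of I1 I2] basis[of I1 I1] basis[of I1 I3] basis[of I2 I3]
      unfolding FF_expand by (simp add: E_def xi_def phi_def vec3_def field_simps)
  qed (simp add: FF_expand eta_def xi_def E_def phi_def vec3_def field_simps)
  then show ?thesis
    unfolding inG10_def by blast
qed

lemma inG12_iff_constants:
  "inG12 C \<longleftrightarrow> F_nonzero C \<and>
     C I1 I2 I3 = 0 \<and> C I1 I3 I2 = C I2 I3 I1 \<and> C I1 I3 I1 = 0 \<and> C I2 I3 I2 = 0"
  (is "_ \<longleftrightarrow> _ \<and> ?lin")
proof -
  have "(\<forall>x y z. FF C x y z = eta x * (eta y * FF C xi xi z - eta z * FF C xi xi y)) \<longleftrightarrow> ?lin"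
  proof
    assume "\<forall>x y z. FF C x y z = eta x * (eta y * FF C xi xi z - eta z * FF C xi xi y)"
    then have basis: "FF C (E i) (E j) (E k) =
        eta (E i) * (eta (E j) * FF C xi xi (E k) - eta (E k) * FF C xi xi (E j))" for i j k
      by blast
    show ?lin
      using basis[of I1 I1 I3] basis[of I1 I2 I3] basis[of I2 I2 I3] basis[of I2 I1 I3]
      unfolding FF_expand by (simp add: E_def eta_def xi_def field_simps)
  qed (simp add: FF_expand eta_def xi_def E_def field_simps)
  then show ?thesis
    unfolding inG12_def by blast
qed

end

theorem theorem4p1:
  fixes C :: sconst
  assumes "lie_structure_constants C"
  shows
   "(inG5 C \<longleftrightarrow>
       bracket C (E I1) (E I2) = vec3 (C I1 I2 I1) (C I1 I2 I2) (C I1 I2 I3) \<and>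
       bracket C (E I1) (E I3) = vec3 0 (C I1 I3 I2) 0 \<and>
       bracket C (E I2) (E I3) = vec3 (C I1 I3 I2) 0 0 \<and>
       C I1 I2 I3 \<noteq> 0 \<and> C I1 I2 I1 * C I1 I3 I2 = 0 \<and> C I1 I2 I2 * C I1 I3 I2 = 0)
  \<and> (inG5 C \<longrightarrow> theta C xi = C I1 I2 I3)
  \<and> (inG6 C \<longleftrightarrow>
       bracket C (E I1) (E I2) = vec3 (C I1 I2 I1) (C I1 I2 I2) 0 \<and>
       bracket C (E I1) (E I3) = vec3 (C I1 I3 I1) (C I1 I3 I2) 0 \<and>
       bracket C (E I2) (E I3) = vec3 (C I1 I3 I2) (C I1 I3 I1) 0 \<and>
       C I1 I3 I1 \<noteq> 0 \<and>
       C I1 I2 I2 * C I1 I3 I2 - C I1 I3 I1 * C I1 I2 I1 = 0 \<and>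
       C I1 I2 I1 * C I1 I3 I2 - C I1 I3 I1 * C I1 I2 I2 = 0)
  \<and> (inG6 C \<longrightarrow> theta_star C xi = - 2 * C I1 I3 I1)
  \<and> (inG10 C \<longleftrightarrow>
       bracket C (E I1) (E I2) = vec3 (C I1 I2 I1) (C I1 I2 I2) 0 \<and>
       bracket C (E I1) (E I3) = vec3 (C I1 I3 I1) (C I1 I3 I2) 0 \<and>
       bracket C (E I2) (E I3) = vec3 (C I2 I3 I1) (- C I1 I3 I1) 0 \<and>
       (C I1 I3 I2 \<noteq> C I2 I3 I1 \<or> C I1 I3 I1 \<noteq> 0) \<and>
       C I1 I2 I1 * C I1 I3 I1 + C I1 I2 I2 * C I2 I3 I1 = 0 \<and>
       C I1 I2 I1 * C I1 I3 I2 - C I1 I2 I2 * C I1 I3 I1 = 0)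
  \<and> (inG12 C \<longleftrightarrow>
       bracket C (E I1) (E I2) = vec3 (C I1 I2 I1) (C I1 I2 I2) 0 \<and>
       bracket C (E I1) (E I3) = vec3 0 (C I1 I3 I2) (C I1 I3 I3) \<and>
       bracket C (E I2) (E I3) = vec3 (C I1 I3 I2) 0 (C I2 I3 I3) \<and>
       (C I1 I3 I3 \<noteq> 0 \<or> C I2 I3 I3 \<noteq> 0) \<and>
       (C I1 I2 I1 - C I2 I3 I3) * C I1 I3 I2 = 0 \<and>
       (C I1 I2 I2 + C I1 I3 I3) * C I1 I3 I2 = 0 \<and>
       (C I1 I2 I1 - C I2 I3 I3) * C I1 I3 I3 + (C I1 I2 I2 + C I1 I3 I3) * C I2 I3 I3 = 0)"
proof -
  note jacobi = jacobi_E1_E2_E3[OF assms, of I1] jacobi_E1_E2_E3[OF assms, of I2]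
    jacobi_E1_E2_E3[OF assms, of I3]
  note classes = inG5_iff_constants[OF assms] inG6_iff_constants[OF assms]
    inG10_iff_constants[OF assms] inG12_iff_constants[OF assms] F_nonzero_iff[OF assms]
  note brackets = bracket_E_E vec3_eq_iff
  show ?thesis
    using jacobi theta_xi[OF assms] theta_star_xi[OF assms]
    unfolding classes brackets by (auto simp: algebra_simps)
qed

end
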